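(* Let $\mathcal{S}\subset\mathbb{R}_{\ge0}$ be measurable with positive Lebesgue measure, $G$ a probability distribution on $\mathbb{R}$, and $T(G)=\int\nu\,dG/\int\delta\,dG$ a ratio functional. Let $\mathcal{I}=\mathcal{I}(|Z_1|,\dots,|Z_n|)$ be any random interval that is a function of nonnegative observations $|Z_1|,\dots,|Z_n|$. Then $$\mathbb{P}^A_G\big[T(G)\in\mathcal{I}\big]=\mathbb{P}^B_{\mathrm{Tilt}[G]}\big[\mathrm{Tilt}[T](\mathrm{Tilt}[G])\in\mathcal{I}\big],$$ where under $\mathbb{P}^A_G$ the $|Z_1|,\dots,|Z_n|$ are independently generated from the end-truncation model with prior $G$, and under $\mathbb{P}^B_{\mathrm{Tilt}[G]}$ they are independently generated from the per-unit truncation model with prior $\mathrm{Tilt}[G]$.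
   Context: $\varphi(z;\mu)$ is the $\mathrm{N}(\mu,1)$ density, $\varphi^{\mathrm{fold}}(z;\mu)=\varphi(z;\mu)+\varphi(-z;\mu)$ and $\Phi(\mathcal{S};\mu)=\int_{\mathcal{S}}\varphi^{\mathrm{fold}}(z;\mu)dz$. End-truncation model with prior $G$: $\mu\sim G$, $|Z|\mid\mu\sim|\mathrm{N}(\mu,1)|$ (folded normal), and $|Z|$ is observed only if $|Z|\in\mathcal{S}$ (each observation is a draw of $|Z|$ conditional on $|Z|\in\mathcal{S}$). Per-unit truncation model with prior $H$: $\mu\sim H$ and $|Z|\mid\mu$ has density $\varphi^{\mathrm{fold}}(z;\mu)\mathbf{1}(z\in\mathcal{S})/\Phi(\mathcal{S};\mu)$. Tilting: $\mathrm{Tilt}[G](d\mu)=\Phi(\mathcal{S};\mu)G(d\mu)/\int\Phi(\mathcal{S};\mu')G(d\mu')$, and for $T(G)=\int\nu\,dG/\int\delta\,dG$, $\mathrm{Tilt}[T](\tilde G)=\int\nu(\mu)\Phi(\mathcal{S};\mu)^{-1}\tilde G(d\mu)/\int\delta(\mu)\Phi(\mathcal{S};\mu)^{-1}\tilde G(d\mu)$ (integrals assumed well defined). *)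

theory Defs
  imports "HOL-Probability.Probability"
begin

definition phi :: "real \<Rightarrow> real \<Rightarrow> real" where
  "phi z \<mu> = normal_density \<mu> 1 z"

definition phi_fold :: "real \<Rightarrow> real \<Rightarrow> real" where
  "phi_fold z \<mu> = phi z \<mu> + phi (- z) \<mu>"

definition Phi :: "real set \<Rightarrow> real \<Rightarrow> real" where
  "Phi S \<mu> = (\<integral>z\<in>S. phi_fold z \<mu> \<partial>lborel)"

definition folded_normal :: "real \<Rightarrow> real measure" where
  "folded_normal \<mu> = density lborel (\<lambda>z. ennreal (indicator {0..} z * phi_fold z \<mu>))"

text \<open>End-truncation model, one observation: mu ~ G, |Z| | mu ~ folded normal,
  and |Z| observed conditional on |Z| in S.\<close>
definition end_trunc_obs :: "real set \<Rightarrow> real measure \<Rightarrow> real measure" where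
  "end_trunc_obs S G =
     (let M0 = bind G folded_normal
      in density M0 (\<lambda>z. indicator S z / emeasure M0 S))"

definition per_unit_obs :: "real set \<Rightarrow> real measure \<Rightarrow> real measure" where
  "per_unit_obs S H =
     bind H (\<lambda>\<mu>. density lborel (\<lambda>z. ennreal (indicator S z * phi_fold z \<mu> / Phi S \<mu>)))"

definition Tilt :: "real set \<Rightarrow> real measure \<Rightarrow> real measure" where
  "Tilt S G = density G (\<lambda>\<mu>. ennreal (Phi S \<mu> / (\<integral>\<mu>'. Phi S \<mu>' \<partial>G)))"

definition ratio_fun :: "(real \<Rightarrow> real) \<Rightarrow> (real \<Rightarrow> real) \<Rightarrow> real measure \<Rightarrow> real" where
  "ratio_fun \<nu> \<delta> G = (\<integral>\<mu>. \<nu> \<mu> \<partial>G) / (\<integral>\<mu>. \<delta> \<mu> \<partial>G)"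

definition tilt_fun :: "real set \<Rightarrow> (real \<Rightarrow> real) \<Rightarrow> (real \<Rightarrow> real) \<Rightarrow> real measure \<Rightarrow> real" where
  "tilt_fun S \<nu> \<delta> Gt =
     (\<integral>\<mu>. \<nu> \<mu> / Phi S \<mu> \<partial>Gt) / (\<integral>\<mu>. \<delta> \<mu> / Phi S \<mu> \<partial>Gt)"

end

theory Submission
  imports Defs
begin

text \<open>
  Tilting leaves the law of a single observation unchanged. Under end truncation,
  \<open>P(|Z| \<in> A) = \<integral>\<Phi>(S \<inter> A;\<mu>) dG / \<integral>\<Phi>(S;\<mu>) dG\<close>; under per-unit truncation with
  prior \<open>Tilt[G] = \<Phi>(S;\<mu>) G / \<integral>\<Phi>(S;\<mu>) dG\<close>, the kernel mass \<open>\<Phi>(S \<inter> A;\<mu>) / \<Phi>(S;\<mu>)\<close>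
  is integrated against that density and the factor \<open>\<Phi>(S;\<mu>)\<close> cancels, giving the same ratio.
  The normalising constant of \<open>Tilt[G]\<close> likewise cancels in \<open>Tilt[T](Tilt[G]) = T(G)\<close>.
  Hence both sides are the probability of one and the same event under one and the same
  product measure.
\<close>

lemma phi_uminus: "phi (- z) \<mu> = normal_density (- \<mu>) 1 z"
  by (simp only: phi_def normal_density_def) (simp add: power2_eq_square algebra_simps)

lemma phi_fold_conv_normal_density:
  "phi_fold z \<mu> = normal_density \<mu> 1 z + normal_density (- \<mu>) 1 z"
  unfolding phi_fold_def phi_uminus by (simp add: phi_def)

lemma phi_fold_pos: "0 < phi_fold z \<mu>"
  by (simp add: phi_fold_conv_normal_density add_pos_pos normal_density_pos)

lemma borel_measurable_phi_fold[measurable]: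
  assumes [measurable]: "f \<in> borel_measurable M" "g \<in> borel_measurable M"
  shows "(\<lambda>x. phi_fold (f x) (g x)) \<in> borel_measurable M"
  unfolding phi_fold_conv_normal_density normal_density_def by measurable

lemma integrable_phi_fold: "integrable lborel (\<lambda>z. phi_fold z \<mu>)"
  by (simp add: phi_fold_conv_normal_density)

lemma integral_phi_fold: "(\<integral>z. phi_fold z \<mu> \<partial>lborel) = 2"
  by (simp add: phi_fold_conv_normal_density)

lemma integrable_indicator_phi_fold:
  "S \<in> sets borel \<Longrightarrow> integrable lborel (\<lambda>z. indicator S z * phi_fold z \<mu>)"
  using integrable_real_mult_indicator[OF _ integrable_phi_fold] by (simp add: mult.commute)

lemma Phi_conv_integral: "Phi S \<mu> = (\<integral>z. indicator S z * phi_fold z \<mu> \<partial>lborel)"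
  by (simp add: Phi_def set_lebesgue_integral_def)

lemma Phi_nonneg: "0 \<le> Phi S \<mu>"
  unfolding Phi_conv_integral by (intro integral_nonneg_AE) (simp add: less_imp_le[OF phi_fold_pos])

lemma ennreal_Phi:
  "S \<in> sets borel \<Longrightarrow> ennreal (Phi S \<mu>) = (\<integral>\<^sup>+z. indicator S z * phi_fold z \<mu> \<partial>lborel)"
  unfolding Phi_conv_integral
  by (rule nn_integral_eq_integral[symmetric])
     (simp_all add: integrable_indicator_phi_fold less_imp_le[OF phi_fold_pos])

lemma borel_measurable_Phi[measurable]:
  assumes [measurable]: "S \<in> sets borel" "g \<in> borel_measurable M"
  shows "(\<lambda>x. Phi S (g x)) \<in> borel_measurable M"
proof -
  have "(\<lambda>\<mu>. Phi S \<mu>) \<in> borel_measurable borel"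
    unfolding Phi_conv_integral by measurable
  then show ?thesis by measurable
qed

lemma Phi_le_2: "S \<in> sets borel \<Longrightarrow> Phi S \<mu> \<le> 2"
  unfolding Phi_conv_integral integral_phi_fold[symmetric, of \<mu>]
  by (intro integral_mono integrable_indicator_phi_fold integrable_phi_fold)
     (simp_all add: indicator_def less_imp_le[OF phi_fold_pos])

lemma Phi_pos:
  assumes S: "S \<in> sets borel" and "emeasure lborel S > 0"
  shows "0 < Phi S \<mu>"
proof -
  have "(\<integral>\<^sup>+z. indicator S z * phi_fold z \<mu> \<partial>lborel) \<noteq> 0"
  proof
    assume "(\<integral>\<^sup>+z. indicator S z * phi_fold z \<mu> \<partial>lborel) = 0"
    then have "AE z in lborel. ennreal (indicator S z * phi_fold z \<mu>) = 0"
      using S by (simp add: nn_integral_0_iff_AE)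
    then have "AE z in lborel. z \<notin> S"
      by eventually_elim (use phi_fold_pos[of _ \<mu>] in \<open>auto simp: indicator_def less_le\<close>)
    then show False
      using assms by (subst (asm) AE_iff_measurable[OF _ refl]) auto
  qed
  then show ?thesis
    using Phi_nonneg[of S \<mu>] by (simp add: ennreal_Phi[OF S, symmetric] less_le)
qed

lemma Phi_atLeast_0: "Phi {0..} \<mu> = 1"
proof -
  have int: "integrable lborel (\<lambda>z. indicator A z * normal_density m 1 z)"
    if "A \<in> sets borel" for A m
    using integrable_mult_indicator[of A lborel "normal_density m 1"] that by simp
  have "Phi {0..} \<mu> = (\<integral>z. indicator {0..} z * normal_density \<mu> 1 z \<partial>lborel)
      + (\<integral>z. indicator {0..} z * normal_density (- \<mu>) 1 z \<partial>lborel)"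
    unfolding Phi_conv_integral phi_fold_conv_normal_density distrib_left
    by (rule Bochner_Integration.integral_add) (simp_all add: int)
  also have "(\<integral>z. indicator {0..} z * normal_density (- \<mu>) 1 z \<partial>lborel)
      = (\<integral>z. indicator {..0} z * normal_density \<mu> 1 z \<partial>lborel)"
    \<comment> \<open>reflect \<open>z \<mapsto> -z\<close>\<close>
    by (subst lborel_integral_real_affine[where c = "-1" and t = 0])
       (auto simp: phi_uminus[symmetric] phi_def indicator_def intro!: Bochner_Integration.integral_cong)
  also have "\<dots> = (\<integral>z. indicator {..<0} z * normal_density \<mu> 1 z \<partial>lborel)"
    by (rule integral_cong_AE)
       (auto intro!: eventually_mono[OF AE_lborel_singleton[of 0]] simp: indicator_def)
  also have "(\<integral>z. indicator {0..} z * normal_density \<mu> 1 z \<partial>lborel) + \<dots>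
      = (\<integral>z. (indicator {0..} z + indicator {..<0} z) * normal_density \<mu> 1 z \<partial>lborel)"
    unfolding distrib_right by (rule Bochner_Integration.integral_add[symmetric]) (simp_all add: int)
  also have "\<dots> = (\<integral>z. normal_density \<mu> 1 z \<partial>lborel)"
    by (rule Bochner_Integration.integral_cong) (simp_all split: split_indicator)
  finally show ?thesis by simp
qed

lemma sets_folded_normal[measurable_cong, simp]: "sets (folded_normal \<mu>) = sets borel"
  by (simp add: folded_normal_def)

lemma emeasure_folded_normal:
  "A \<in> sets borel \<Longrightarrow> emeasure (folded_normal \<mu>) A = Phi (A \<inter> {0..}) \<mu>"
  unfolding folded_normal_def
  by (subst emeasure_density) (auto simp: ennreal_Phi intro!: nn_integral_cong split: split_indicator)

lemma space_folded_normal[simp]: "space (folded_normal \<mu>) = UNIV"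
  by (simp add: folded_normal_def)

lemma prob_space_folded_normal: "prob_space (folded_normal \<mu>)"
  by (rule prob_spaceI) (simp add: emeasure_folded_normal Phi_atLeast_0)

lemma measurable_folded_normal: "folded_normal \<in> borel \<rightarrow>\<^sub>M subprob_algebra borel"
proof (rule measurable_subprob_algebra)
  fix A :: "real set" assume "A \<in> sets borel"
  then show "(\<lambda>\<mu>. emeasure (folded_normal \<mu>) A) \<in> borel_measurable borel"
    by (simp add: emeasure_folded_normal)
qed (simp_all add: prob_space_folded_normal prob_space_imp_subprob_space)

lemma emeasure_bind_folded_normal:
  assumes G: "sets G = sets borel" and B: "B \<in> sets borel" "B \<subseteq> {0..}"
  shows "emeasure (G \<bind> folded_normal) B = (\<integral>\<^sup>+\<mu>. Phi B \<mu> \<partial>G)"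
proof -
  have "space G \<noteq> {}"
    using sets_eq_imp_space_eq[OF G] by simp
  moreover have "folded_normal \<in> G \<rightarrow>\<^sub>M subprob_algebra borel"
    using measurable_folded_normal by (simp add: measurable_cong_sets[OF G])
  ultimately show ?thesis
    using B by (simp add: emeasure_bind emeasure_folded_normal Int_absorb2)
qed

definition trunc_folded_normal :: "real set \<Rightarrow> real \<Rightarrow> real measure" where
  "trunc_folded_normal S \<mu> =
     density lborel (\<lambda>z. ennreal (indicator S z * phi_fold z \<mu> / Phi S \<mu>))"

lemma per_unit_obs_conv_bind: "per_unit_obs S H = H \<bind> trunc_folded_normal S"
  unfolding per_unit_obs_def trunc_folded_normal_def ..

lemma sets_trunc_folded_normal[measurable_cong, simp]: "sets (trunc_folded_normal S \<mu>) = sets borel"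
  by (simp add: trunc_folded_normal_def)

lemma emeasure_trunc_folded_normal:
  assumes S: "S \<in> sets borel" "emeasure lborel S > 0" and A: "A \<in> sets borel"
  shows "emeasure (trunc_folded_normal S \<mu>) A = ennreal (Phi (S \<inter> A) \<mu> / Phi S \<mu>)"
proof -
  have Phi_S: "0 < Phi S \<mu>"
    using Phi_pos[OF S] .
  have "emeasure (trunc_folded_normal S \<mu>) A
      = (\<integral>\<^sup>+z. ennreal (indicator (S \<inter> A) z * phi_fold z \<mu>) / ennreal (Phi S \<mu>) \<partial>lborel)"
    unfolding trunc_folded_normal_def using S A Phi_S
    by (subst emeasure_density)
       (auto intro!: nn_integral_cong simp: divide_ennreal less_imp_le[OF phi_fold_pos]
         split: split_indicator)
  also have "\<dots> = ennreal (Phi (S \<inter> A) \<mu>) / ennreal (Phi S \<mu>)"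
    using S A by (subst nn_integral_divide) (auto simp: ennreal_Phi)
  also have "\<dots> = ennreal (Phi (S \<inter> A) \<mu> / Phi S \<mu>)"
    using Phi_S by (intro divide_ennreal Phi_nonneg)
  finally show ?thesis .
qed


lemma space_trunc_folded_normal[simp]: "space (trunc_folded_normal S \<mu>) = UNIV"
  by (simp add: trunc_folded_normal_def)

lemma measurable_trunc_folded_normal:
  assumes [measurable]: "S \<in> sets borel" and "emeasure lborel S > 0"
  shows "trunc_folded_normal S \<in> borel \<rightarrow>\<^sub>M subprob_algebra borel"
proof (rule measurable_subprob_algebra)
  fix \<mu> :: real
  have "emeasure (trunc_folded_normal S \<mu>) (space (trunc_folded_normal S \<mu>)) = 1"
    using Phi_pos[OF assms, of \<mu>] by (simp add: emeasure_trunc_folded_normal[OF assms])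
  then show "subprob_space (trunc_folded_normal S \<mu>)"
    by (intro prob_space_imp_subprob_space prob_spaceI)
next
  fix A :: "real set" assume "A \<in> sets borel"
  then show "(\<lambda>\<mu>. emeasure (trunc_folded_normal S \<mu>) A) \<in> borel_measurable borel"
    by (simp add: emeasure_trunc_folded_normal[OF assms])
qed simp_all

lemma emeasure_density_indicator_divide:
  assumes "S \<in> sets M" "A \<in> sets M"
  shows "emeasure (density M (\<lambda>z. indicator S z / c)) A = emeasure M (S \<inter> A) / c"
proof -
  have "emeasure (density M (\<lambda>z. indicator S z / c)) A = (\<integral>\<^sup>+z. indicator (S \<inter> A) z / c \<partial>M)"
    using assms by (subst emeasure_density) (auto intro!: nn_integral_cong split: split_indicator)
  also have "\<dots> = emeasure M (S \<inter> A) / c"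
    using assms by (subst nn_integral_divide) auto
  finally show ?thesis .
qed

lemma sets_end_trunc_obs[measurable_cong]:
  "sets G = sets borel \<Longrightarrow> sets (end_trunc_obs S G) = sets borel"
  unfolding end_trunc_obs_def Let_def
  by (subst sets_density, rule sets_bind) (auto dest: sets_eq_imp_space_eq)

lemma emeasure_end_trunc_obs:
  assumes G: "sets G = sets borel" and S: "S \<in> sets borel" "S \<subseteq> {0..}" and A: "A \<in> sets borel"
  shows "emeasure (end_trunc_obs S G) A = (\<integral>\<^sup>+\<mu>. Phi (S \<inter> A) \<mu> \<partial>G) / (\<integral>\<^sup>+\<mu>. Phi S \<mu> \<partial>G)"
proof -
  have "sets (G \<bind> folded_normal) = sets borel"
    using sets_eq_imp_space_eq[OF G] by (intro sets_bind) auto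
  moreover have "S \<inter> A \<subseteq> {0..}"
    using S by auto
  ultimately show ?thesis
    using assms
    by (simp add: end_trunc_obs_def emeasure_density_indicator_divide emeasure_bind_folded_normal)
qed

lemma sets_Tilt[simp, measurable_cong]: "sets (Tilt S G) = sets G"
  by (simp add: Tilt_def)

lemma space_Tilt[simp]: "space (Tilt S G) = space G"
  by (simp add: Tilt_def)

context
  fixes S :: "real set" and G :: "real measure"
  assumes S_borel[measurable]: "S \<in> sets borel" and S_pos: "emeasure lborel S > 0"
    and G_prob: "prob_space G" and G_sets[measurable_cong]: "sets G = sets borel"
begin

lemma integrable_Phi: "integrable G (Phi S)"
proof -
  interpret prob_space G by (rule G_prob)
  show ?thesis
    using Phi_le_2[OF S_borel] Phi_nonneg by (intro integrable_const_bound[where B = 2]) auto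
qed

lemma integral_Phi_pos: "0 < (\<integral>\<mu>. Phi S \<mu> \<partial>G)"
proof -
  have "(\<integral>\<mu>. Phi S \<mu> \<partial>G) \<noteq> 0"
  proof
    assume "(\<integral>\<mu>. Phi S \<mu> \<partial>G) = 0"
    then have "AE \<mu> in G. Phi S \<mu> = 0"
      using integrable_Phi Phi_nonneg by (subst (asm) integral_nonneg_eq_0_iff_AE) auto
    then have "AE \<mu> in G. False"
      using Phi_pos[OF S_borel S_pos] by (auto elim: AE_mp simp: less_le)
    then show False
      by (simp add: prob_space.AE_False[OF G_prob])
  qed
  then show ?thesis
    using integral_nonneg_AE[of "Phi S" G] Phi_nonneg by (simp add: less_le)
qed

lemma nn_integral_Phi: "(\<integral>\<^sup>+\<mu>. Phi S \<mu> \<partial>G) = ennreal (\<integral>\<mu>. Phi S \<mu> \<partial>G)"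
  using integrable_Phi Phi_nonneg by (intro nn_integral_eq_integral) auto

lemma integral_Tilt_divide_Phi:
  assumes [measurable]: "f \<in> borel_measurable borel"
  shows "(\<integral>\<mu>. f \<mu> / Phi S \<mu> \<partial>Tilt S G) = (\<integral>\<mu>. f \<mu> \<partial>G) / (\<integral>\<mu>. Phi S \<mu> \<partial>G)"
proof -
  let ?c = "\<integral>\<mu>. Phi S \<mu> \<partial>G"
  have "(\<integral>\<mu>. f \<mu> / Phi S \<mu> \<partial>Tilt S G) = (\<integral>\<mu>. (Phi S \<mu> / ?c) *\<^sub>R (f \<mu> / Phi S \<mu>) \<partial>G)"
    unfolding Tilt_def using integral_Phi_pos Phi_nonneg
    by (intro integral_density) auto
  also have "\<dots> = (\<integral>\<mu>. f \<mu> / ?c \<partial>G)"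
    using Phi_pos[OF S_borel S_pos] by (intro Bochner_Integration.integral_cong) (auto simp: less_le)
  finally show ?thesis
    by simp
qed

lemma tilt_fun_Tilt:
  "\<nu> \<in> borel_measurable borel \<Longrightarrow> \<delta> \<in> borel_measurable borel \<Longrightarrow>
    tilt_fun S \<nu> \<delta> (Tilt S G) = ratio_fun \<nu> \<delta> G"
  using integral_Phi_pos by (simp add: tilt_fun_def ratio_fun_def integral_Tilt_divide_Phi)

lemma emeasure_per_unit_obs_Tilt:
  assumes A[measurable]: "A \<in> sets borel"
  shows "emeasure (per_unit_obs S (Tilt S G)) A
    = (\<integral>\<^sup>+\<mu>. Phi (S \<inter> A) \<mu> \<partial>G) / (\<integral>\<^sup>+\<mu>. Phi S \<mu> \<partial>G)"
proof -
  let ?c = "\<integral>\<mu>. Phi S \<mu> \<partial>G"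
  have weight: "ennreal (Phi S \<mu> / ?c) * ennreal (Phi (S \<inter> A) \<mu> / Phi S \<mu>)
      = ennreal (Phi (S \<inter> A) \<mu>) / ennreal ?c" for \<mu>
    using Phi_pos[OF S_borel S_pos, of \<mu>] integral_Phi_pos Phi_nonneg[of "S \<inter> A" \<mu>]
    by (simp add: ennreal_mult[symmetric] divide_ennreal)
  have "trunc_folded_normal S \<in> Tilt S G \<rightarrow>\<^sub>M subprob_algebra borel"
    using measurable_trunc_folded_normal[OF S_borel S_pos] by (simp add: measurable_cong_sets[OF G_sets])
  moreover have "space G \<noteq> {}"
    using sets_eq_imp_space_eq[OF G_sets] by simp
  ultimately have "emeasure (per_unit_obs S (Tilt S G)) A
      = (\<integral>\<^sup>+\<mu>. ennreal (Phi (S \<inter> A) \<mu> / Phi S \<mu>) \<partial>Tilt S G)"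
    by (simp add: per_unit_obs_conv_bind emeasure_bind emeasure_trunc_folded_normal[OF S_borel S_pos])
  also have "\<dots> = (\<integral>\<^sup>+\<mu>. ennreal (Phi (S \<inter> A) \<mu>) / ennreal ?c \<partial>G)"
    unfolding Tilt_def by (simp add: nn_integral_density weight)
  also have "\<dots> = (\<integral>\<^sup>+\<mu>. Phi (S \<inter> A) \<mu> \<partial>G) / (\<integral>\<^sup>+\<mu>. Phi S \<mu> \<partial>G)"
    by (simp add: nn_integral_divide nn_integral_Phi)
  finally show ?thesis .
qed

lemma end_trunc_obs_eq_per_unit_obs_Tilt:
  assumes "S \<subseteq> {0..}"
  shows "end_trunc_obs S G = per_unit_obs S (Tilt S G)"
proof (rule measure_eqI)
  have "space (Tilt S G) \<noteq> {}"
    using sets_eq_imp_space_eq[OF G_sets] by simp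
  then show "sets (end_trunc_obs S G) = sets (per_unit_obs S (Tilt S G))"
    using G_sets by (simp add: sets_end_trunc_obs per_unit_obs_conv_bind)
next
  fix A assume "A \<in> sets (end_trunc_obs S G)"
  then show "emeasure (end_trunc_obs S G) A = emeasure (per_unit_obs S (Tilt S G)) A"
    using assms G_sets
    by (simp add: sets_end_trunc_obs emeasure_end_trunc_obs emeasure_per_unit_obs_Tilt)
qed

end

theorem theorem3:
  fixes S :: "real set" and G :: "real measure" and \<nu> \<delta> :: "real \<Rightarrow> real"
    and n :: nat and I :: "(nat \<Rightarrow> real) \<Rightarrow> real set"
  assumes S_meas: "S \<in> sets borel"
    and S_nonneg: "S \<subseteq> {0..}"
    and S_pos: "emeasure lborel S > 0"
    and G_prob: "prob_space G" and G_sets: "sets G = sets borel"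
    and \<nu>_meas: "\<nu> \<in> borel_measurable borel" and \<delta>_meas: "\<delta> \<in> borel_measurable borel"
    and \<nu>_int: "integrable G \<nu>" and \<delta>_int: "integrable G \<delta>"
    and I_interval: "\<And>x. is_interval (I x)"
    and I_meas: "\<And>t. {x \<in> space (PiM {..<n} (\<lambda>_. borel)). t \<in> I x}
                        \<in> sets (PiM {..<n} (\<lambda>_. borel :: real measure))"
  shows "measure (PiM {..<n} (\<lambda>_. end_trunc_obs S G))
           {x \<in> space (PiM {..<n} (\<lambda>_. end_trunc_obs S G)). ratio_fun \<nu> \<delta> G \<in> I x}
       = measure (PiM {..<n} (\<lambda>_. per_unit_obs S (Tilt S G)))
           {x \<in> space (PiM {..<n} (\<lambda>_. per_unit_obs S (Tilt S G))).
              tilt_fun S \<nu> \<delta> (Tilt S G) \<in> I x}"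
proof -
  have "end_trunc_obs S G = per_unit_obs S (Tilt S G)"
    using end_trunc_obs_eq_per_unit_obs_Tilt[OF S_meas S_pos G_prob G_sets S_nonneg] .
  moreover have "tilt_fun S \<nu> \<delta> (Tilt S G) = ratio_fun \<nu> \<delta> G"
    using tilt_fun_Tilt[OF S_meas S_pos G_prob G_sets \<nu>_meas \<delta>_meas] .
  ultimately show ?thesis
    by simp
qed

end
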